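(* Let $\tau$ be a finite topology on a finite set $X$. Then there exists a finite topology $\tau'$ on $X$ such that $G_2(\tau)\cong G_2(\tau')$ and the height of $\tau'$ is at most $2$.
   Context: A finite topology on $X$ is a family of subsets (open sets) containing $\emptyset,X$ and closed under unions and intersections. $m_\tau(x)$ is the intersection of all open sets containing $x$. The height of $\tau$ is the largest $h$ such that there are distinct $v_1,\dots,v_h\in X$ with $m_\tau(v_1)\subseteq m_\tau(v_2)\subseteq\cdots\subseteq m_\tau(v_h)$. $G_2(\tau)$ is the simple graph on $X$ in which distinct $x,y$ are adjacent iff there do not exist disjoint open sets $U_x\ni x$, $U_y\ni y$. *)

theory Defs
  imports Main
begin

definition finite_topology :: "'a set \<Rightarrow> 'a set set \<Rightarrow> bool" where
  "finite_topology X T \<longleftrightarrow> finite X \<and> T \<subseteq> Pow X \<and> {} \<in> T \<and> X \<in> T \<and>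
     (\<forall>U\<in>T. \<forall>V\<in>T. U \<union> V \<in> T) \<and> (\<forall>U\<in>T. \<forall>V\<in>T. U \<inter> V \<in> T)"

definition min_open :: "'a set set \<Rightarrow> 'a \<Rightarrow> 'a set" where
  "min_open T x = \<Inter> {U \<in> T. x \<in> U}"

definition topo_height :: "'a set \<Rightarrow> 'a set set \<Rightarrow> nat" where
  "topo_height X T = Max {h. \<exists>v :: nat \<Rightarrow> 'a. inj_on v {..<h} \<and> (\<forall>i<h. v i \<in> X) \<and>
       (\<forall>i. Suc i < h \<longrightarrow> min_open T (v i) \<subseteq> min_open T (v (Suc i)))}"

definition G2_adj :: "'a set \<Rightarrow> 'a set set \<Rightarrow> 'a \<Rightarrow> 'a \<Rightarrow> bool" where
  "G2_adj X T x y \<longleftrightarrow> x \<in> X \<and> y \<in> X \<and> x \<noteq> y \<and>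
     \<not> (\<exists>U\<in>T. \<exists>V\<in>T. x \<in> U \<and> y \<in> V \<and> U \<inter> V = {})"

definition G2_iso :: "'a set \<Rightarrow> 'a set set \<Rightarrow> 'a set set \<Rightarrow> bool" where
  "G2_iso X T T' \<longleftrightarrow> (\<exists>f. bij_betw f X X \<and>
     (\<forall>x\<in>X. \<forall>y\<in>X. G2_adj X T x y \<longleftrightarrow> G2_adj X T' (f x) (f y)))"

end

theory Submission
  imports Defs
begin

text \<open>Two points are adjacent in \<open>G\<^sub>2\<close> iff their minimal neighbourhoods \<open>m(x)\<close>, \<open>m(y)\<close> meet,
so \<open>G\<^sub>2\<close> only depends on \<open>m\<close>. Pick one point in each \<open>\<subseteq>\<close>-minimal set \<open>m(x)\<close> and let \<open>R\<close> be the
set of these representatives: every \<open>m(z)\<close> contains a point of \<open>R\<close>, and \<open>m(r) \<inter> R = {r}\<close> for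
\<open>r \<in> R\<close>. Shrinking each \<open>m(x)\<close> to \<open>{x} \<union> (m(x) \<inter> R)\<close> still yields the minimal neighbourhoods
of a topology. Two shrunken neighbourhoods meet iff the original ones do, because a common
point of \<open>m(x)\<close> and \<open>m(y)\<close> lies above a common representative; and the points of \<open>R\<close> become
isolated, so no chain of three distinct minimal neighbourhoods is left.\<close>

lemma finite_Inter_closed:
  assumes "finite F" "F \<noteq> {}" "F \<subseteq> T" "\<forall>U\<in>T. \<forall>V\<in>T. U \<inter> V \<in> T"
  shows "\<Inter>F \<in> T"
  using assms by (induction F rule: finite_ne_induct) auto

lemma min_open_least:
  assumes "U \<in> T" "x \<in> U"
  shows "min_open T x \<subseteq> U"
  using assms unfolding min_open_def by auto

lemma
  assumes "finite_topology X T" "x \<in> X"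
  shows min_open_in_topology: "min_open T x \<in> T"
    and self_in_min_open: "x \<in> min_open T x"
    and min_open_subset: "min_open T x \<subseteq> X"
proof -
  have "finite T" "X \<in> T" "\<forall>U\<in>T. \<forall>V\<in>T. U \<inter> V \<in> T"
    using assms(1) finite_subset unfolding finite_topology_def by auto
  then show "min_open T x \<in> T"
    unfolding min_open_def using assms(2) by (intro finite_Inter_closed) auto
  show "x \<in> min_open T x"
    unfolding min_open_def by blast
  show "min_open T x \<subseteq> X"
    using min_open_least \<open>X \<in> T\<close> assms(2) .
qed

lemma min_open_mono:
  assumes "finite_topology X T" "x \<in> X" "y \<in> min_open T x"
  shows "min_open T y \<subseteq> min_open T x"
  using min_open_in_topology[OF assms(1,2)] assms(3) by (rule min_open_least)

lemma G2_adj_iff_min_open: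
  assumes "finite_topology X T"
  shows "G2_adj X T x y \<longleftrightarrow> x \<in> X \<and> y \<in> X \<and> x \<noteq> y \<and> min_open T x \<inter> min_open T y \<noteq> {}"
proof -
  have "(\<exists>U\<in>T. \<exists>V\<in>T. x \<in> U \<and> y \<in> V \<and> U \<inter> V = {}) \<longleftrightarrow> min_open T x \<inter> min_open T y = {}"
    if "x \<in> X" "y \<in> X"
  proof
    assume "\<exists>U\<in>T. \<exists>V\<in>T. x \<in> U \<and> y \<in> V \<and> U \<inter> V = {}"
    then obtain U V where "U \<in> T" "V \<in> T" "x \<in> U" "y \<in> V" "U \<inter> V = {}"
      by blast
    then show "min_open T x \<inter> min_open T y = {}"
      using min_open_least[of U T x] min_open_least[of V T y] by auto
  next
    assume "min_open T x \<inter> min_open T y = {}"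
    with that show "\<exists>U\<in>T. \<exists>V\<in>T. x \<in> U \<and> y \<in> V \<and> U \<inter> V = {}"
      using min_open_in_topology[OF assms] self_in_min_open[OF assms] by meson
  qed
  then show ?thesis
    unfolding G2_adj_def by (cases "x \<in> X \<and> y \<in> X") auto
qed

lemma G2_iso_if_min_open_meet_iff:
  assumes "finite_topology X T" "finite_topology X T'"
    and "\<And>x y. x \<in> X \<Longrightarrow> y \<in> X \<Longrightarrow> x \<noteq> y \<Longrightarrow>
      min_open T x \<inter> min_open T y \<noteq> {} \<longleftrightarrow> min_open T' x \<inter> min_open T' y \<noteq> {}"
  shows "G2_iso X T T'"
  unfolding G2_iso_def
proof (intro exI[of _ id] conjI ballI)
  fix x y assume "x \<in> X" "y \<in> X"
  then show "G2_adj X T x y \<longleftrightarrow> G2_adj X T' (id x) (id y)"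
    using assms(3)[of x y] G2_adj_iff_min_open[OF assms(1)] G2_adj_iff_min_open[OF assms(2)]
    by (cases "x = y") simp_all
qed simp

definition nbhd_topology :: "'a set \<Rightarrow> ('a \<Rightarrow> 'a set) \<Rightarrow> 'a set set" where
  "nbhd_topology X M = {U. U \<subseteq> X \<and> (\<forall>x\<in>U. M x \<subseteq> U)}"

lemma
  assumes "finite X" "\<And>x. x \<in> X \<Longrightarrow> x \<in> M x \<and> M x \<subseteq> X"
    and "\<And>x y. x \<in> X \<Longrightarrow> y \<in> M x \<Longrightarrow> M y \<subseteq> M x"
  shows finite_topology_nbhd_topology: "finite_topology X (nbhd_topology X M)"
    and min_open_nbhd_topology: "x \<in> X \<Longrightarrow> min_open (nbhd_topology X M) x = M x"
proof -
  show "finite_topology X (nbhd_topology X M)"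
    unfolding finite_topology_def nbhd_topology_def using assms(1,2) by auto
  assume "x \<in> X"
  then have "M x \<in> nbhd_topology X M"
    unfolding nbhd_topology_def using assms(2,3) by blast
  then have "min_open (nbhd_topology X M) x \<subseteq> M x"
    using min_open_least assms(2) \<open>x \<in> X\<close> by metis
  moreover have "M x \<subseteq> min_open (nbhd_topology X M) x"
    unfolding min_open_def nbhd_topology_def by auto
  ultimately show "min_open (nbhd_topology X M) x = M x" by blast
qed

lemma topo_height_le_2I:
  assumes no_chain: "\<And>a b c. a \<in> X \<Longrightarrow> b \<in> X \<Longrightarrow> c \<in> X \<Longrightarrow> a \<noteq> b \<Longrightarrow> b \<noteq> c \<Longrightarrow> a \<noteq> c \<Longrightarrow>
      min_open T a \<subseteq> min_open T b \<Longrightarrow> min_open T b \<subseteq> min_open T c \<Longrightarrow> False"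
  shows "topo_height X T \<le> 2"
proof -
  let ?H = "{h. \<exists>v :: nat \<Rightarrow> 'a. inj_on v {..<h} \<and> (\<forall>i<h. v i \<in> X) \<and>
       (\<forall>i. Suc i < h \<longrightarrow> min_open T (v i) \<subseteq> min_open T (v (Suc i)))}"
  have bounded: "h \<le> 2" if "h \<in> ?H" for h
  proof (rule ccontr)
    assume "\<not> h \<le> 2"
    then have h: "0 < h" "1 < h" "2 < h" by auto
    obtain v where inj: "inj_on v {..<h}" and "\<forall>i<h. v i \<in> X"
      and chain: "\<forall>i. Suc i < h \<longrightarrow> min_open T (v i) \<subseteq> min_open T (v (Suc i))"
      using \<open>h \<in> ?H\<close> by blast
    have "v 0 \<noteq> v 1" "v 1 \<noteq> v 2" "v 0 \<noteq> v 2"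
      using inj_onD[OF inj] h by fastforce+
    moreover have "min_open T (v 0) \<subseteq> min_open T (v 1)" "min_open T (v 1) \<subseteq> min_open T (v 2)"
      using chain h by (auto simp: numeral_2_eq_2)
    ultimately show False
      using no_chain \<open>\<forall>i<h. v i \<in> X\<close> h by blast
  qed
  have "finite ?H" "0 \<in> ?H"
    using finite_nat_set_iff_bounded_le bounded by auto
  then show ?thesis
    unfolding topo_height_def using bounded by (subst Max_le_iff) blast+
qed

definition minimal_point :: "'a set set \<Rightarrow> 'a \<Rightarrow> bool" where
  "minimal_point T x \<longleftrightarrow> (\<forall>w\<in>min_open T x. min_open T w = min_open T x)"

lemma exists_minimal_point_in_min_open:
  assumes "finite_topology X T" "z \<in> X"
  shows "\<exists>w\<in>min_open T z. minimal_point T w"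
proof -
  have "finite X"
    using assms(1) unfolding finite_topology_def by blast
  then have "finite (min_open T ` min_open T z)"
    using finite_subset[OF min_open_subset[OF assms]] by blast
  moreover have "min_open T ` min_open T z \<noteq> {}"
    using self_in_min_open[OF assms] by blast
  ultimately obtain w where w: "w \<in> min_open T z"
    and least: "\<forall>v\<in>min_open T z. min_open T v \<subseteq> min_open T w \<longrightarrow> min_open T w = min_open T v"
    using finite_has_minimal[of "min_open T ` min_open T z"] by (auto simp: image_iff)
  have "w \<in> X"
    using w min_open_subset[OF assms] by blast
  have "minimal_point T w"
    unfolding minimal_point_def
  proof
    fix v assume v: "v \<in> min_open T w"
    then have "v \<in> min_open T z"
      using min_open_mono[OF assms w] by blast
    moreover have "min_open T v \<subseteq> min_open T w"
      using min_open_mono[OF assms(1) \<open>w \<in> X\<close> v] .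
    ultimately show "min_open T v = min_open T w"
      using least by blast
  qed
  with w show ?thesis by blast
qed

definition min_open_transversal :: "'a set \<Rightarrow> 'a set set \<Rightarrow> 'a set \<Rightarrow> bool" where
  "min_open_transversal X T R \<longleftrightarrow>
     R \<subseteq> X \<and> (\<forall>r\<in>R. min_open T r \<inter> R = {r}) \<and> (\<forall>z\<in>X. min_open T z \<inter> R \<noteq> {})"

lemma exists_min_open_transversal:
  assumes "finite_topology X T"
  shows "\<exists>R. min_open_transversal X T R"
proof -
  define rep where "rep U = (SOME r. r \<in> U)" for U :: "'a set"
  define R where "R = {rep (min_open T x) | x. x \<in> X \<and> minimal_point T x}"
  have rep_in: "rep (min_open T x) \<in> min_open T x" if "x \<in> X" for x
    unfolding rep_def using self_in_min_open[OF assms that] by (rule someI)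
  have min_open_rep: "min_open T (rep (min_open T x)) = min_open T x"
    if "x \<in> X" "minimal_point T x" for x
    using that rep_in unfolding minimal_point_def by blast
  have "R \<subseteq> X"
    unfolding R_def using rep_in min_open_subset[OF assms] by blast
  moreover have "min_open T r \<inter> R = {r}" if "r \<in> R" for r
  proof -
    obtain x where x: "x \<in> X" "minimal_point T x" "r = rep (min_open T x)"
      using \<open>r \<in> R\<close> unfolding R_def by blast
    have "w = r" if "w \<in> min_open T r" "w \<in> R" for w
    proof -
      obtain y where y: "y \<in> X" "minimal_point T y" "w = rep (min_open T y)"
        using \<open>w \<in> R\<close> unfolding R_def by blast
      have "min_open T y = min_open T w"
        using min_open_rep y by simp
      also have "\<dots> = min_open T x"
      proof -
        have "w \<in> min_open T x"
          using \<open>w \<in> min_open T r\<close> min_open_rep[OF x(1,2)] x(3) by simp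
        then show ?thesis
          using x(2) unfolding minimal_point_def by blast
      qed
      finally show "w = r"
        using x y by simp
    qed
    moreover have "r \<in> min_open T r"
      using \<open>R \<subseteq> X\<close> \<open>r \<in> R\<close> self_in_min_open[OF assms] by blast
    ultimately show ?thesis
      using \<open>r \<in> R\<close> by blast
  qed
  moreover have "min_open T z \<inter> R \<noteq> {}" if z: "z \<in> X" for z
  proof -
    obtain w where w: "w \<in> min_open T z" "minimal_point T w"
      using exists_minimal_point_in_min_open[OF assms z] by blast
    have "w \<in> X"
      using w(1) min_open_subset[OF assms z] by blast
    then have "rep (min_open T w) \<in> R"
      unfolding R_def using w(2) by blast
    moreover have "rep (min_open T w) \<in> min_open T z"
      using rep_in[OF \<open>w \<in> X\<close>] min_open_mono[OF assms z w(1)] by blast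
    ultimately have "rep (min_open T w) \<in> min_open T z \<inter> R"
      by blast
    then show ?thesis by blast
  qed
  ultimately have "min_open_transversal X T R"
    unfolding min_open_transversal_def by simp
  then show ?thesis ..
qed

definition reduced_nbhd :: "'a set set \<Rightarrow> 'a set \<Rightarrow> 'a \<Rightarrow> 'a set" where
  "reduced_nbhd T R x = insert x (min_open T x \<inter> R)"

context
  fixes X :: "'a set" and T :: "'a set set" and R :: "'a set"
  assumes topology: "finite_topology X T" and transversal: "min_open_transversal X T R"
begin

lemma reduced_nbhd_transversal_point:
  assumes "r \<in> R"
  shows "reduced_nbhd T R r = {r}"
  using assms transversal unfolding reduced_nbhd_def min_open_transversal_def by blast

lemma reduced_nbhd_subset_min_open:
  assumes "x \<in> X"
  shows "reduced_nbhd T R x \<subseteq> min_open T x"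
  using self_in_min_open[OF topology assms] unfolding reduced_nbhd_def by blast

lemma reduced_nbhd_mono:
  assumes "y \<in> reduced_nbhd T R x"
  shows "reduced_nbhd T R y \<subseteq> reduced_nbhd T R x"
proof (cases "y = x")
  case False
  then have "y \<in> R"
    using assms unfolding reduced_nbhd_def by blast
  then show ?thesis
    using reduced_nbhd_transversal_point assms by simp
qed simp

lemma reduced_nbhd_meet_iff:
  assumes "x \<in> X" "y \<in> X"
  shows "reduced_nbhd T R x \<inter> reduced_nbhd T R y \<noteq> {} \<longleftrightarrow> min_open T x \<inter> min_open T y \<noteq> {}"
proof
  assume "reduced_nbhd T R x \<inter> reduced_nbhd T R y \<noteq> {}"
  then show "min_open T x \<inter> min_open T y \<noteq> {}"
    using reduced_nbhd_subset_min_open assms by blast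
next
  assume "min_open T x \<inter> min_open T y \<noteq> {}"
  then obtain z where z: "z \<in> min_open T x" "z \<in> min_open T y"
    by blast
  then have "z \<in> X"
    using min_open_subset[OF topology assms(1)] by blast
  then obtain r where "r \<in> min_open T z" "r \<in> R"
    using transversal unfolding min_open_transversal_def by blast
  moreover have "min_open T z \<subseteq> min_open T x" "min_open T z \<subseteq> min_open T y"
    using min_open_mono[OF topology] assms z by blast+
  ultimately have "r \<in> reduced_nbhd T R x \<inter> reduced_nbhd T R y"
    unfolding reduced_nbhd_def by blast
  then show "reduced_nbhd T R x \<inter> reduced_nbhd T R y \<noteq> {}"
    by blast
qed

lemma reduced_nbhd_no_chain:
  assumes "a \<noteq> b" "b \<noteq> c"
    and "reduced_nbhd T R a \<subseteq> reduced_nbhd T R b" "reduced_nbhd T R b \<subseteq> reduced_nbhd T R c"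
  shows False
proof -
  have "b \<in> R"
    using assms(2,4) unfolding reduced_nbhd_def by blast
  then show False
    using assms(1,3) reduced_nbhd_transversal_point unfolding reduced_nbhd_def by blast
qed

end

theorem lemma3p5:
  fixes X :: "'a set" and T :: "'a set set"
  assumes "finite X" and "finite_topology X T"
  shows "\<exists>T'. finite_topology X T' \<and> G2_iso X T T' \<and> topo_height X T' \<le> 2"
proof -
  obtain R where R: "min_open_transversal X T R"
    using exists_min_open_transversal[OF assms(2)] ..
  let ?M = "reduced_nbhd T R"
  define T' where "T' = nbhd_topology X ?M"
  have nbhd: "x \<in> ?M x \<and> ?M x \<subseteq> X" if "x \<in> X" for x
    using that reduced_nbhd_subset_min_open[OF assms(2) R] min_open_subset[OF assms(2)]
    unfolding reduced_nbhd_def by blast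
  have mono: "?M y \<subseteq> ?M x" if "x \<in> X" "y \<in> ?M x" for x y
    using reduced_nbhd_mono[OF assms(2) R that(2)] .
  have T': "finite_topology X T'"
    unfolding T'_def using assms(1) nbhd mono by (rule finite_topology_nbhd_topology)
  have min_open_T': "min_open T' x = ?M x" if "x \<in> X" for x
    unfolding T'_def using assms(1) nbhd mono that by (rule min_open_nbhd_topology)
  have "G2_iso X T T'"
    using assms(2) T' by (rule G2_iso_if_min_open_meet_iff)
      (simp add: min_open_T' reduced_nbhd_meet_iff[OF assms(2) R])
  moreover have "topo_height X T' \<le> 2"
    by (rule topo_height_le_2I)
      (use reduced_nbhd_no_chain[OF assms(2) R] in \<open>simp add: min_open_T'\<close>)
  ultimately show ?thesis
    using T' by blast
qed

end
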